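(* Let $0<p<1$ and let $G\sim\mathcal{G}(n,p)$, with adjacency matrix $A$. Let $\ell\ge 2$ be an integer. Then $$\Pr\big(G \text{ has a cospectral mate with level } \ell' \text{ for some } \ell' \text{ with } \ell'\mid \ell\big)\to 0 \quad\text{as } n\to\infty.$$ In particular, $\Pr(G \text{ has a cospectral mate with level } \ell)\to 0$ as $n\to\infty$. Consequently, almost all graphs have no generalized cospectral mate with level $\ell'$ for any $\ell'\mid\ell$; in particular $$\Pr(G \text{ has a generalized cospectral mate with level } \ell)\to 0\quad\text{as } n\to\infty.$$
   Context: $\mathcal{G}(n,p)$ is the random graph on $n$ labelled vertices in which each of the $\binom n2$ possible edges is present independently with probability $p$. The adjacency matrix $A_G$ of a graph $G$ on vertex set $V$ is the $V\times V$ matrix with entry $1$ if $ij$ is an edge and $0$ otherwise. For a rational matrix $M$, its level $\ell(M)$ is the smallest positive integer $\ell$ with $\ell M$ an integer matrix. A rational orthogonal matrix is a matrix $Q$ with rational entries and $Q^\top Q=I$. Two graphs are cospectral if they are non-isomorphic and their adjacency matrices have the same multiset of eigenvalues; a graph $H$ is a cospectral mate of $G$ with level $\ell$ if $H$ is not isomorphic to $G$ and there is a rational orthogonal matrix $Q$ of level $\ell$ with $Q^\top A_G Q=A_H$. The generalized spectrum of $G$ is the spectrum of $A_G$ together with the spectrum of the adjacency matrix of the complement $\overline G$; $H$ is a generalized cospectral mate of $G$ with level $\ell$ if $H$ is non-isomorphic to $G$, has the same generalized spectrum, and $Q^\top A_G Q=A_H$ for some rational orthogonal $Q$ of level $\ell$.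 *)

theory Defs
  imports Complex_Main "Jordan_Normal_Form.Char_Poly"
begin

definition all_edges :: "nat \<Rightarrow> nat set set" where
  "all_edges n = {{i, j} | i j. i < n \<and> j < n \<and> i \<noteq> j}"

definition graphs :: "nat \<Rightarrow> nat set set set" where
  "graphs n = Pow (all_edges n)"

definition adj_mat :: "nat \<Rightarrow> nat set set \<Rightarrow> rat mat" where
  "adj_mat n E = mat n n (\<lambda>(i, j). if {i, j} \<in> E then 1 else 0)"

definition compl_graph :: "nat \<Rightarrow> nat set set \<Rightarrow> nat set set" where
  "compl_graph n E = all_edges n - E"

definition graph_iso :: "nat \<Rightarrow> nat set set \<Rightarrow> nat set set \<Rightarrow> bool" where
  "graph_iso n E F \<longleftrightarrow> (\<exists>\<sigma>. bij_betw \<sigma> {0..<n} {0..<n} \<and> F = (\<lambda>e. \<sigma> ` e) ` E)"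

text \<open>Same spectrum: same multiset of eigenvalues, i.e. equal characteristic polynomials.\<close>
definition cospectral_mats :: "rat mat \<Rightarrow> rat mat \<Rightarrow> bool" where
  "cospectral_mats A B \<longleftrightarrow> char_poly A = char_poly B"

definition rat_orthogonal :: "nat \<Rightarrow> rat mat \<Rightarrow> bool" where
  "rat_orthogonal n Q \<longleftrightarrow> Q \<in> carrier_mat n n \<and> transpose_mat Q * Q = 1\<^sub>m n"

definition level :: "nat \<Rightarrow> rat mat \<Rightarrow> nat" where
  "level n Q = (LEAST l. l > 0 \<and> (\<forall>i<n. \<forall>j<n. of_nat l * Q $$ (i, j) \<in> \<int>))"

definition cospectral_mate_level :: "nat \<Rightarrow> nat set set \<Rightarrow> nat set set \<Rightarrow> nat \<Rightarrow> bool" where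
  "cospectral_mate_level n E F l \<longleftrightarrow> F \<in> graphs n \<and> \<not> graph_iso n E F \<and>
     (\<exists>Q. rat_orthogonal n Q \<and> level n Q = l \<and>
          transpose_mat Q * adj_mat n E * Q = adj_mat n F)"

definition gen_cospectral_mate_level :: "nat \<Rightarrow> nat set set \<Rightarrow> nat set set \<Rightarrow> nat \<Rightarrow> bool" where
  "gen_cospectral_mate_level n E F l \<longleftrightarrow> F \<in> graphs n \<and> \<not> graph_iso n E F \<and>
     cospectral_mats (adj_mat n E) (adj_mat n F) \<and>
     cospectral_mats (adj_mat n (compl_graph n E)) (adj_mat n (compl_graph n F)) \<and>
     (\<exists>Q. rat_orthogonal n Q \<and> level n Q = l \<and>
          transpose_mat Q * adj_mat n E * Q = adj_mat n F)"

definition Gnp_prob :: "nat \<Rightarrow> real \<Rightarrow> (nat set set \<Rightarrow> bool) \<Rightarrow> real" where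
  "Gnp_prob n p P = (\<Sum>E\<in>graphs n. if P E then p ^ card E * (1 - p) ^ (card (all_edges n) - card E) else 0)"

end

theory Submission
  imports Defs "HOL-Library.Disjoint_Sets"
begin

(*
  Let Q be rational orthogonal with l Q integral and Q^T A Q = B, where A and B are the
  adjacency matrices of G and of a graph F. Every column of Q is a unit vector with entries in
  (1/l) Z, so it has at most l^2 nonzero entries. If every row of Q has an entry +-1, then Q is a
  signed permutation matrix and F is isomorphic to G. Otherwise let T be the set of rows with an
  entry +-1 and m = n - |T| > 0: at least m columns have no entry +-1, and a greedy choice gives
  k = ceil (m / l^4) of them, x_1, ..., x_k, with pairwise disjoint supports outside T. The
  identity Q^T A Q = B then forces (A x_i)_w to be an integer for w in T, and x_i^T A x_j to be
  an integer. Each of these constraints has a pivot edge whose toggling changes its value by a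
  non-integer and which no other constraint reads, so in G(n,p) all of them hold with
  probability at most max(p, 1-p) ^ #constraints, and there are at least k n / (8 l^4) of them.
  A union bound over T and over the at most (n (2l+1))^(l^2) possible sparse columns gives a
  bound that tends to 0. Generalized cospectral mates are in particular cospectral mates.
*)


section \<open>Random subsets\<close>

lemma sum_Pow_insert:
  assumes "finite A" "e \<notin> A"
  shows "(\<Sum>E\<in>Pow (insert e A). g E) = (\<Sum>E\<in>Pow A. g E + g (insert e E))"
proof -
  have "inj_on (insert e) (Pow A)"
    using assms(2) by (auto intro!: inj_onI)
  then show ?thesis
    using assms unfolding Pow_insert
    by (subst sum.union_disjoint) (auto simp: sum.reindex sum.distrib)
qed

definition subset_weight :: "real \<Rightarrow> 'a set \<Rightarrow> 'a set \<Rightarrow> real" where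
  "subset_weight p A E = p ^ card E * (1 - p) ^ card (A - E)"

definition subset_prob :: "real \<Rightarrow> 'a set \<Rightarrow> ('a set \<Rightarrow> bool) \<Rightarrow> real" where
  "subset_prob p A P = (\<Sum>E\<in>Pow A. if P E then subset_weight p A E else 0)"

lemma Gnp_prob_eq_subset_prob: "Gnp_prob n p P = subset_prob p (all_edges n) P"
proof -
  have "finite (all_edges n)"
    by (rule finite_subset[of _ "Pow {..<n}"]) (auto simp: all_edges_def)
  then show ?thesis
    unfolding Gnp_prob_def subset_prob_def subset_weight_def graphs_def
    by (intro sum.cong refl) (auto simp: card_Diff_subset finite_subset)
qed

lemma subset_weight_nonneg: "0 \<le> p \<Longrightarrow> p \<le> 1 \<Longrightarrow> 0 \<le> subset_weight p A E"
  unfolding subset_weight_def by simp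

lemma subset_weight_insert:
  assumes "finite A" "e \<notin> A" "E \<subseteq> A"
  shows "subset_weight p (insert e A) E = (1 - p) * subset_weight p A E"
    and "subset_weight p (insert e A) (insert e E) = p * subset_weight p A E"
proof -
  have "finite E" "e \<notin> E" using assms finite_subset by auto
  moreover have "card (insert e A - E) = Suc (card (A - E))" "insert e A - insert e E = A - E"
    using assms by (auto simp: Diff_insert_absorb insert_Diff_if)
  ultimately show "subset_weight p (insert e A) E = (1 - p) * subset_weight p A E"
    and "subset_weight p (insert e A) (insert e E) = p * subset_weight p A E"
    using assms(1) by (simp_all add: subset_weight_def)
qed

lemma subset_prob_insert:
  assumes "finite A" "e \<notin> A"
  shows "subset_prob p (insert e A) P = (\<Sum>E\<in>Pow A. subset_weight p A E *
            ((if P (insert e E) then p else 0) + (if P E then 1 - p else 0)))"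
  unfolding subset_prob_def sum_Pow_insert[OF assms]
  by (intro sum.cong refl) (auto simp: subset_weight_insert[OF assms] algebra_simps)

lemma subset_prob_nonneg: "0 \<le> p \<Longrightarrow> p \<le> 1 \<Longrightarrow> 0 \<le> subset_prob p A P"
  unfolding subset_prob_def by (intro sum_nonneg) (simp add: subset_weight_nonneg)

lemma subset_prob_mono:
  assumes "0 \<le> p" "p \<le> 1" "\<And>E. E \<subseteq> A \<Longrightarrow> P E \<Longrightarrow> R E"
  shows "subset_prob p A P \<le> subset_prob p A R"
  unfolding subset_prob_def by (intro sum_mono) (use assms subset_weight_nonneg in auto)

lemma subset_prob_True: "finite A \<Longrightarrow> subset_prob p A (\<lambda>_. True) = 1"
  using prod_add[of A "\<lambda>_. p" "\<lambda>_. 1 - p"] by (simp add: subset_prob_def subset_weight_def)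

lemma subset_prob_le_1: "finite A \<Longrightarrow> 0 \<le> p \<Longrightarrow> p \<le> 1 \<Longrightarrow> subset_prob p A P \<le> 1"
  using subset_prob_mono[of p A P "\<lambda>_. True"] subset_prob_True[of A p] by simp

lemma subset_prob_Bex_le:
  assumes "finite C" "0 \<le> p" "p \<le> 1"
  shows "subset_prob p A (\<lambda>E. \<exists>c\<in>C. P c E) \<le> (\<Sum>c\<in>C. subset_prob p A (P c))"
proof -
  have "subset_prob p A (\<lambda>E. \<exists>c\<in>C. P c E)
      \<le> (\<Sum>E\<in>Pow A. \<Sum>c\<in>C. if P c E then subset_weight p A E else 0)"
    unfolding subset_prob_def
  proof (intro sum_mono)
    fix E
    show "(if \<exists>c\<in>C. P c E then subset_weight p A E else 0)
        \<le> (\<Sum>c\<in>C. if P c E then subset_weight p A E else 0)"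
    proof (cases "\<exists>c\<in>C. P c E")
      case True
      then obtain c where c: "c \<in> C" "P c E" by blast
      have "(if P c E then subset_weight p A E else 0)
          \<le> (\<Sum>c\<in>C. if P c E then subset_weight p A E else 0)"
        using c assms subset_weight_nonneg by (intro member_le_sum) auto
      then show ?thesis using True c by simp
    qed (use assms subset_weight_nonneg in \<open>auto intro: sum_nonneg\<close>)
  qed
  also have "\<dots> = (\<Sum>c\<in>C. subset_prob p A (P c))"
    unfolding subset_prob_def by (rule sum.swap)
  finally show ?thesis .
qed

lemma Gnp_prob_nonneg: "0 \<le> p \<Longrightarrow> p \<le> 1 \<Longrightarrow> 0 \<le> Gnp_prob n p P"
  unfolding Gnp_prob_eq_subset_prob by (rule subset_prob_nonneg)

lemma Gnp_prob_mono: "0 \<le> p \<Longrightarrow> p \<le> 1 \<Longrightarrow> (\<And>E. P E \<Longrightarrow> R E) \<Longrightarrow> Gnp_prob n p P \<le> Gnp_prob n p R"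
  unfolding Gnp_prob_eq_subset_prob by (rule subset_prob_mono) auto

definition insensitive_to :: "'a \<Rightarrow> ('a set \<Rightarrow> bool) \<Rightarrow> bool" where
  "insensitive_to e R \<longleftrightarrow> (\<forall>E. R (insert e E) = R (E - {e}))"

definition toggle_exclusive :: "'a \<Rightarrow> ('a set \<Rightarrow> bool) \<Rightarrow> bool" where
  "toggle_exclusive e P \<longleftrightarrow> (\<forall>E. \<not> (P (insert e E) \<and> P (E - {e})))"

(* Condition on all elements but e: R does not see e, and at most one value of e makes P true. *)
lemma subset_prob_conj_le:
  assumes "finite A" "e \<in> A" "insensitive_to e R" "toggle_exclusive e P" "0 \<le> p" "p \<le> 1"
  shows "subset_prob p A (\<lambda>E. P E \<and> R E) \<le> max p (1 - p) * subset_prob p A R"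
proof -
  define A' where "A' = A - {e}"
  have A': "A = insert e A'" "e \<notin> A'" "finite A'" using assms(1,2) unfolding A'_def by auto
  have R: "R (insert e E) = R E" and P: "\<not> (P (insert e E) \<and> P E)" if "E \<in> Pow A'" for E
  proof -
    have "E - {e} = E" using that A'(2) by auto
    then show "R (insert e E) = R E" "\<not> (P (insert e E) \<and> P E)"
      using assms(3,4) unfolding insensitive_to_def toggle_exclusive_def by metis+
  qed
  have "subset_prob p A (\<lambda>E. P E \<and> R E) = (\<Sum>E\<in>Pow A'. subset_weight p A' E *
      ((if P (insert e E) \<and> R (insert e E) then p else 0) + (if P E \<and> R E then 1 - p else 0)))"
    unfolding A'(1) by (rule subset_prob_insert[OF A'(3,2)])
  also have "\<dots> \<le> (\<Sum>E\<in>Pow A'. subset_weight p A' E * (max p (1 - p) * (if R E then 1 else 0)))"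
  proof (intro sum_mono mult_left_mono)
    fix E assume "E \<in> Pow A'"
    then show "(if P (insert e E) \<and> R (insert e E) then p else 0) + (if P E \<and> R E then 1 - p else 0)
        \<le> max p (1 - p) * (if R E then 1 else 0)"
      using R[of E] P[of E] by auto
  qed (simp add: subset_weight_nonneg assms(5,6))
  also have "\<dots> = max p (1 - p) * (\<Sum>E\<in>Pow A'. subset_weight p A' E *
      ((if R (insert e E) then p else 0) + (if R E then 1 - p else 0)))"
    unfolding sum_distrib_left using R by (intro sum.cong refl) (auto simp: algebra_simps)
  also have "\<dots> = max p (1 - p) * subset_prob p A R"
    unfolding A'(1) by (simp only: subset_prob_insert[OF A'(3,2)])
  finally show ?thesis .
qed

lemma subset_prob_Ball_le:
  assumes "finite A" "finite I" "0 \<le> p" "p \<le> 1"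
    and "\<And>i. i \<in> I \<Longrightarrow> pivot i \<in> A"
    and "\<And>i. i \<in> I \<Longrightarrow> toggle_exclusive (pivot i) (P i)"
    and "\<And>i j. i \<in> I \<Longrightarrow> j \<in> I \<Longrightarrow> i \<noteq> j \<Longrightarrow> insensitive_to (pivot i) (P j)"
  shows "subset_prob p A (\<lambda>E. \<forall>i\<in>I. P i E) \<le> max p (1 - p) ^ card I"
  using assms(2,5-)
proof (induction I rule: finite_induct)
  case empty
  then show ?case using subset_prob_le_1[OF assms(1,3,4)] by simp
next
  case (insert i I)
  have "insensitive_to (pivot i) (P j)" if "j \<in> I" for j
    using insert.prems(3)[of i j] insert.hyps(2) that by auto
  then have "insensitive_to (pivot i) (\<lambda>E. \<forall>j\<in>I. P j E)"
    unfolding insensitive_to_def by simp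
  then have "subset_prob p A (\<lambda>E. P i E \<and> (\<forall>j\<in>I. P j E))
      \<le> max p (1 - p) * subset_prob p A (\<lambda>E. \<forall>j\<in>I. P j E)"
    using insert.prems(1,2)[OF insertI1] by (intro subset_prob_conj_le assms(1,3,4))
  also have "\<dots> \<le> max p (1 - p) * max p (1 - p) ^ card I"
    using insert.prems by (intro mult_left_mono insert.IH) auto
  finally show ?case using insert.hyps by simp
qed

section \<open>Rational orthogonal matrices of bounded level\<close>

lemma card_UN_le_mult:
  assumes "finite X" "card X \<le> L" "\<And>u. u \<in> X \<Longrightarrow> card (B u) \<le> M"
  shows "card (\<Union>u\<in>X. B u) \<le> L * M"
proof -
  have "card (\<Union>u\<in>X. B u) \<le> (\<Sum>u\<in>X. card (B u))" using assms(1) by (rule card_UN_le)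
  also have "\<dots> \<le> card X * M" using sum_mono[of X "\<lambda>u. card (B u)" "\<lambda>_. M"] assms(3) by simp
  also have "\<dots> \<le> L * M" using assms(2) by simp
  finally show ?thesis .
qed

(* Greedy: keep some j, discard the at most L * L members meeting S j, and recurse. *)
lemma exists_disjoint_subfamily:
  fixes S :: "'a \<Rightarrow> 'b set"
  assumes "finite V"
    and "\<And>j. j \<in> V \<Longrightarrow> S j \<noteq> {} \<and> finite (S j) \<and> card (S j) \<le> L"
    and "\<And>u. card {j\<in>V. u \<in> S j} \<le> L"
  shows "\<exists>J\<subseteq>V. disjoint_family_on S J \<and> card V \<le> L * L * card J"
  using assms
proof (induction "card V" arbitrary: V rule: less_induct)
  case less
  show ?case
  proof (cases "V = {}")
    case False
    then obtain j where j: "j \<in> V" by blast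
    define N where "N = (\<Union>u\<in>S j. {j'\<in>V. u \<in> S j'})"
    have N: "N \<subseteq> V" "j \<in> N" "finite N"
      using less.prems(1,2) j finite_subset[of N V] unfolding N_def by auto
    have card_N: "card N \<le> L * L"
      unfolding N_def using less.prems(2,3) j by (intro card_UN_le_mult) auto
    have "card (V - N) < card V"
      using less.prems(1) N(2) j by (intro psubset_card_mono) auto
    moreover have "card {j\<in>V - N. u \<in> S j} \<le> L" for u
    proof -
      have "card {j\<in>V - N. u \<in> S j} \<le> card {j\<in>V. u \<in> S j}"
        using less.prems(1) by (intro card_mono) auto
      then show ?thesis using less.prems(3)[of u] by linarith
    qed
    ultimately obtain J where J: "J \<subseteq> V - N" "disjoint_family_on S J" "card (V - N) \<le> L * L * card J"
      using less.hyps[of "V - N"] less.prems(1,2) by auto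
    have "finite J" using J(1) less.prems(1) finite_subset by blast
    have "S i \<inter> S j = {}" if "i \<in> J" for i
      using that J(1) unfolding N_def by auto
    then have "disjoint_family_on S (insert j J)"
      using J(2) unfolding disjoint_family_on_def by blast
    moreover have "card V \<le> L * L * card (insert j J)"
    proof -
      have "j \<notin> J" using J(1) N(2) by blast
      have "card V = card N + card (V - N)"
        using N less.prems(1) card_Diff_subset[of N V] card_mono[of V N] by simp
      also have "\<dots> \<le> L * L + L * L * card J" using card_N J(3) by simp
      also have "\<dots> = L * L * card (insert j J)" using \<open>finite J\<close> \<open>j \<notin> J\<close> by simp
      finally show ?thesis .
    qed
    moreover have "insert j J \<subseteq> V" using J(1) j by blast
    ultimately show ?thesis by blast
  qed (simp add: disjoint_family_on_def)
qed

lemma unit_vector_entry_bounded: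
  fixes f :: "'a \<Rightarrow> 'b :: linordered_idom"
  assumes "finite I" "(\<Sum>i\<in>I. f i ^ 2) = 1" "i \<in> I"
  shows "\<bar>f i\<bar> \<le> 1"
proof -
  have "f i ^ 2 \<le> 1"
    using member_le_sum[of i I "\<lambda>i. f i ^ 2"] assms by simp
  then show ?thesis by (simp add: abs_square_le_1)
qed

lemma unit_vector_unit_entry:
  fixes f :: "'a \<Rightarrow> 'b :: linordered_idom"
  assumes "finite I" "(\<Sum>i\<in>I. f i ^ 2) = 1" "j \<in> I" "\<bar>f j\<bar> = 1" "i \<in> I" "i \<noteq> j"
  shows "f i = 0"
proof -
  have "(\<Sum>i\<in>I. f i ^ 2) = f j ^ 2 + (\<Sum>i\<in>I - {j}. f i ^ 2)"
    using assms(1,3) by (rule sum.remove)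
  moreover have "f j ^ 2 = 1" using assms(4) by (metis abs_one power2_abs power_one)
  ultimately have "(\<Sum>i\<in>I - {j}. f i ^ 2) = 0" using assms(2) by simp
  then show ?thesis using assms(1,5,6) by (simp add: sum_nonneg_eq_0_iff)
qed

lemma card_nonzero_le_level_sq:
  fixes f :: "'a \<Rightarrow> rat"
  assumes "finite I" "(\<Sum>i\<in>I. f i ^ 2) = 1" "0 < l" "\<And>i. i \<in> I \<Longrightarrow> of_nat l * f i \<in> \<int>"
  shows "card {i\<in>I. f i \<noteq> 0} \<le> l ^ 2"
proof -
  have "1 \<le> (of_nat l * f i) ^ 2" if "i \<in> I" "f i \<noteq> 0" for i
  proof -
    from assms(4)[OF that(1)] obtain z where z: "of_nat l * f i = of_int z"
      by (auto elim: Ints_cases)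
    then have "z \<noteq> 0" using that(2) assms(3) by auto
    then have "1 \<le> \<bar>z\<bar>" by arith
    then have "1 \<le> z ^ 2" using abs_le_square_iff[of 1 z] by simp
    then show ?thesis unfolding z by (metis of_int_le_iff of_int_1 of_int_power)
  qed
  then have "of_nat (card {i\<in>I. f i \<noteq> 0}) \<le> (\<Sum>i\<in>{i\<in>I. f i \<noteq> 0}. (of_nat l * f i) ^ 2)"
    using sum_mono[of "{i\<in>I. f i \<noteq> 0}" "\<lambda>_. 1::rat"] by simp
  also have "\<dots> \<le> (\<Sum>i\<in>I. (of_nat l * f i) ^ 2)"
    using assms(1) by (intro sum_mono2) auto
  also have "\<dots> = of_nat (l ^ 2)"
    using assms(2) by (simp add: power_mult_distrib flip: sum_distrib_left)
  finally show ?thesis by (simp only: of_nat_le_iff)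
qed

locale orthonormal_level =
  fixes n l :: nat and q :: "nat \<Rightarrow> nat \<Rightarrow> rat"
  assumes cols_orthonormal:
      "\<And>j k. j < n \<Longrightarrow> k < n \<Longrightarrow> (\<Sum>a<n. q a j * q a k) = (if j = k then 1 else 0)"
    and rows_orthonormal:
      "\<And>i j. i < n \<Longrightarrow> j < n \<Longrightarrow> (\<Sum>b<n. q i b * q j b) = (if i = j then 1 else 0)"
    and level_pos: "0 < l"
    and level_integral: "\<And>i j. i < n \<Longrightarrow> j < n \<Longrightarrow> of_nat l * q i j \<in> \<int>"
begin

lemma col_sum_sq: "j < n \<Longrightarrow> (\<Sum>a<n. q a j ^ 2) = 1"
  using cols_orthonormal[of j j] by (simp add: power2_eq_square)

lemma row_sum_sq: "i < n \<Longrightarrow> (\<Sum>b<n. q i b ^ 2) = 1"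
  using rows_orthonormal[of i i] by (simp add: power2_eq_square)

lemma abs_entry_le_1: "i < n \<Longrightarrow> j < n \<Longrightarrow> \<bar>q i j\<bar> \<le> 1"
  using unit_vector_entry_bounded[of "{..<n}" "\<lambda>a. q a j" i] col_sum_sq[of j] by simp

lemma unit_entry_row: "i < n \<Longrightarrow> j < n \<Longrightarrow> \<bar>q i j\<bar> = 1 \<Longrightarrow> k < n \<Longrightarrow> k \<noteq> j \<Longrightarrow> q i k = 0"
  using unit_vector_unit_entry[of "{..<n}" "\<lambda>b. q i b" j k] row_sum_sq[of i] by simp

lemma unit_entry_col: "i < n \<Longrightarrow> j < n \<Longrightarrow> \<bar>q i j\<bar> = 1 \<Longrightarrow> a < n \<Longrightarrow> a \<noteq> i \<Longrightarrow> q a j = 0"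
  using unit_vector_unit_entry[of "{..<n}" "\<lambda>a. q a j" i a] col_sum_sq[of j] by simp

definition col_support :: "nat \<Rightarrow> nat set" where
  "col_support j = {a\<in>{..<n}. q a j \<noteq> 0}"

definition unit_rows :: "nat set" where
  "unit_rows = {i\<in>{..<n}. \<exists>j<n. \<bar>q i j\<bar> = 1}"

definition nonunit_cols :: "nat set" where
  "nonunit_cols = {j\<in>{..<n}. \<forall>i<n. \<bar>q i j\<bar> \<noteq> 1}"

definition col_fun :: "nat \<Rightarrow> nat \<Rightarrow> rat" where
  "col_fun j a = (if a < n then q a j else 0)"

lemma card_col_support_le: "j < n \<Longrightarrow> card (col_support j) \<le> l ^ 2"
  using card_nonzero_le_level_sq[of "{..<n}" "\<lambda>a. q a j" l] col_sum_sq[of j] level_pos level_integral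
  unfolding col_support_def by simp

lemma card_row_support_le: "i < n \<Longrightarrow> card {b\<in>{..<n}. q i b \<noteq> 0} \<le> l ^ 2"
  using card_nonzero_le_level_sq[of "{..<n}" "\<lambda>b. q i b" l] row_sum_sq[of i] level_pos level_integral
  by simp

lemma col_support_nonempty: "j < n \<Longrightarrow> col_support j \<noteq> {}"
proof
  assume "j < n" "col_support j = {}"
  then have "(\<Sum>a<n. q a j ^ 2) = 0" unfolding col_support_def by simp
  then show False using col_sum_sq[OF \<open>j < n\<close>] by simp
qed

lemma nonunit_col_abs_lt_1:
  assumes "j \<in> nonunit_cols" "a < n"
  shows "\<bar>q a j\<bar> < 1"
proof -
  have "j < n" "\<bar>q a j\<bar> \<noteq> 1" using assms unfolding nonunit_cols_def by auto
  then show ?thesis using abs_entry_le_1[OF assms(2)] by (simp add: less_le)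
qed

lemma nonunit_col_support_disjoint:
  assumes "j \<in> nonunit_cols"
  shows "col_support j \<inter> unit_rows = {}"
proof (intro equals0I)
  fix a assume "a \<in> col_support j \<inter> unit_rows"
  then obtain c where a: "a < n" "q a j \<noteq> 0" "c < n" "\<bar>q a c\<bar> = 1"
    unfolding col_support_def unit_rows_def by blast
  have "j < n" "\<bar>q a j\<bar> \<noteq> 1" using assms a(1) unfolding nonunit_cols_def by auto
  then have "c \<noteq> j" using a(4) by blast
  then show False using unit_entry_row[OF a(1,3,4) \<open>j < n\<close>] a(2) by blast
qed

lemma card_unit_rows_le_nonunit_cols: "n - card unit_rows \<le> card nonunit_cols"
proof -
  define row_of where "row_of j = (SOME i. i < n \<and> \<bar>q i j\<bar> = 1)" for j
  let ?U = "{..<n} - nonunit_cols"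
  have row_of: "row_of j < n \<and> \<bar>q (row_of j) j\<bar> = 1" if "j \<in> ?U" for j
  proof -
    have "\<exists>i. i < n \<and> \<bar>q i j\<bar> = 1" using that unfolding nonunit_cols_def by auto
    then show ?thesis unfolding row_of_def by (rule someI_ex)
  qed
  have "inj_on row_of ?U"
  proof (rule inj_onI)
    fix j k assume jk: "j \<in> ?U" "k \<in> ?U" "row_of j = row_of k"
    show "j = k"
    proof (rule ccontr)
      assume "j \<noteq> k"
      then have "q (row_of j) k = 0"
        using unit_entry_row[of "row_of j" j k] row_of[OF jk(1)] jk(1,2) by auto
      then show False using row_of[OF jk(2)] jk(3) by (metis abs_zero zero_neq_one)
    qed
  qed
  moreover have "row_of ` ?U \<subseteq> unit_rows"
    using row_of unfolding unit_rows_def by auto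
  moreover have "finite unit_rows" by (simp add: unit_rows_def)
  ultimately have "card ?U \<le> card unit_rows" by (rule card_inj_on_le)
  moreover have "card ?U = n - card nonunit_cols"
  proof -
    have sub: "nonunit_cols \<subseteq> {..<n}" unfolding nonunit_cols_def by auto
    show ?thesis using card_Diff_subset[OF finite_subset[OF sub] sub] by simp
  qed
  ultimately show ?thesis by linarith
qed

lemma exists_disjoint_nonunit_cols:
  "\<exists>J\<subseteq>nonunit_cols. disjoint_family_on col_support J \<and> n - card unit_rows \<le> l ^ 4 * card J"
proof -
  have "card {j\<in>nonunit_cols. a \<in> col_support j} \<le> l ^ 2" for a
  proof (cases "a < n")
    case True
    have "{j\<in>nonunit_cols. a \<in> col_support j} \<subseteq> {b\<in>{..<n}. q a b \<noteq> 0}"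
      by (auto simp: col_support_def nonunit_cols_def)
    then have "card {j\<in>nonunit_cols. a \<in> col_support j} \<le> card {b\<in>{..<n}. q a b \<noteq> 0}"
      by (intro card_mono) auto
    then show ?thesis using card_row_support_le[OF True] by linarith
  next
    case False
    then have "{j\<in>nonunit_cols. a \<in> col_support j} = {}" by (auto simp: col_support_def)
    then show ?thesis by (metis card.empty zero_le)
  qed
  moreover have "col_support j \<noteq> {} \<and> finite (col_support j) \<and> card (col_support j) \<le> l ^ 2"
    if "j \<in> nonunit_cols" for j
    using that col_support_nonempty card_col_support_le
    by (auto simp: nonunit_cols_def col_support_def)
  moreover have "finite nonunit_cols" by (simp add: nonunit_cols_def)
  ultimately obtain J where J: "J \<subseteq> nonunit_cols" "disjoint_family_on col_support J"
      "card nonunit_cols \<le> l ^ 2 * l ^ 2 * card J"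
    using exists_disjoint_subfamily[of nonunit_cols col_support "l ^ 2"] by blast
  have "l ^ 2 * l ^ 2 = l ^ 4" by (simp flip: power_add)
  then have "n - card unit_rows \<le> l ^ 4 * card J"
    using J(3) card_unit_rows_le_nonunit_cols by simp
  then show ?thesis using J(1,2) by blast
qed

lemma unit_rows_all_imp_perm:
  assumes "unit_rows = {..<n}"
  obtains \<pi> where "bij_betw \<pi> {..<n} {..<n}" "\<And>i. i < n \<Longrightarrow> \<bar>q i (\<pi> i)\<bar> = 1"
proof -
  define \<pi> where "\<pi> i = (SOME j. j < n \<and> \<bar>q i j\<bar> = 1)" for i
  have \<pi>: "\<pi> i < n \<and> \<bar>q i (\<pi> i)\<bar> = 1" if "i < n" for i
  proof -
    have "\<exists>j. j < n \<and> \<bar>q i j\<bar> = 1" using that assms unfolding unit_rows_def by auto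
    then show ?thesis unfolding \<pi>_def by (rule someI_ex)
  qed
  have "inj_on \<pi> {..<n}"
  proof (rule inj_onI)
    fix i i' assume ii': "i \<in> {..<n}" "i' \<in> {..<n}" "\<pi> i = \<pi> i'"
    show "i = i'"
    proof (rule ccontr)
      assume "i \<noteq> i'"
      then have "q i' (\<pi> i) = 0"
        using unit_entry_col[of i "\<pi> i" i'] \<pi>[of i] ii'(1,2) by auto
      then show False using \<pi>[of i'] ii' by (metis abs_zero lessThan_iff zero_neq_one)
    qed
  qed
  moreover have "\<pi> ` {..<n} \<subseteq> {..<n}" using \<pi> by auto
  ultimately have "bij_betw \<pi> {..<n} {..<n}"
    unfolding bij_betw_def by (simp add: endo_inj_surj)
  then show ?thesis using \<pi> that by blast
qed

end

lemma rat_orthogonal_cols: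
  assumes "rat_orthogonal n Q" "j < n" "k < n"
  shows "(\<Sum>a<n. Q $$ (a, j) * Q $$ (a, k)) = (if j = k then 1 else 0)"
proof -
  have Q: "Q \<in> carrier_mat n n" "transpose_mat Q * Q = 1\<^sub>m n"
    using assms(1) unfolding rat_orthogonal_def by auto
  have "(transpose_mat Q * Q) $$ (j, k) = (\<Sum>a<n. Q $$ (a, j) * Q $$ (a, k))"
    using Q(1) assms(2,3) by (simp add: scalar_prod_def lessThan_atLeast0)
  then show ?thesis using Q(2) assms(2,3) by simp
qed

lemma rat_orthogonal_rows:
  assumes "rat_orthogonal n Q" "i < n" "j < n"
  shows "(\<Sum>b<n. Q $$ (i, b) * Q $$ (j, b)) = (if i = j then 1 else 0)"
proof -
  have Q: "Q \<in> carrier_mat n n" "transpose_mat Q * Q = 1\<^sub>m n"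
    using assms(1) unfolding rat_orthogonal_def by auto
  then have "Q * transpose_mat Q = 1\<^sub>m n"
    by (intro mat_mult_left_right_inverse[OF _ Q(1)]) auto
  moreover have "(Q * transpose_mat Q) $$ (i, j) = (\<Sum>b<n. Q $$ (i, b) * Q $$ (j, b))"
    using Q(1) assms(2,3) by (simp add: scalar_prod_def lessThan_atLeast0)
  ultimately show ?thesis using assms(2,3) by simp
qed

lemma rat_common_denominator:
  fixes R :: "rat set"
  assumes "finite R"
  shows "\<exists>L>0. \<forall>r\<in>R. of_nat L * r \<in> \<int>"
  using assms
proof (induction R rule: finite_induct)
  case (insert r R)
  obtain L where L: "0 < L" "\<forall>s\<in>R. of_nat L * s \<in> \<int>" using insert.IH by blast
  obtain a b where ab: "quotient_of r = (a, b)" by force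
  have "0 < b" "r = of_int a / of_int b"
    using quotient_of_denom_pos[OF ab] quotient_of_div[OF ab] by auto
  have "of_nat (L * nat b) * s \<in> \<int>" if "s \<in> insert r R" for s
  proof (cases "s = r")
    case True
    have "of_nat (L * nat b) * s = of_nat L * (of_int b * r)"
      using True \<open>0 < b\<close> by (simp add: mult_ac)
    also have "\<dots> = of_nat L * of_int a" using \<open>0 < b\<close> \<open>r = of_int a / of_int b\<close> by simp
    finally show ?thesis by (metis Ints_mult Ints_of_int Ints_of_nat)
  next
    case False
    then have "of_nat L * s \<in> \<int>" using that L(2) by auto
    moreover have "of_nat (L * nat b) * s = of_nat (nat b) * (of_nat L * s)" by (simp add: mult_ac)
    ultimately show ?thesis by (metis Ints_mult Ints_of_nat)
  qed
  then have "\<forall>s\<in>insert r R. of_nat (L * nat b) * s \<in> \<int>" by blast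
  moreover have "0 < L * nat b" using L(1) \<open>0 < b\<close> by simp
  ultimately show ?case by blast
qed (intro exI[of _ 1], simp)

lemma level_integral:
  assumes "level n Q dvd l" "i < n" "j < n"
  shows "of_nat l * Q $$ (i, j) \<in> \<int>"
proof -
  have "\<exists>L>0. \<forall>r\<in>(\<lambda>(i, j). Q $$ (i, j)) ` ({..<n} \<times> {..<n}). of_nat L * r \<in> \<int>"
    by (intro rat_common_denominator) simp
  then have "\<exists>L. L > 0 \<and> (\<forall>i<n. \<forall>j<n. of_nat L * Q $$ (i, j) \<in> \<int>)" by auto
  then have "level n Q > 0 \<and> (\<forall>i<n. \<forall>j<n. of_nat (level n Q) * Q $$ (i, j) \<in> \<int>)"
    unfolding level_def by (rule LeastI_ex)
  then have "of_nat (level n Q) * Q $$ (i, j) \<in> \<int>" using assms(2,3) by blast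
  moreover obtain c where "l = level n Q * c" using assms(1) by blast
  then have "of_nat l * Q $$ (i, j) = of_nat c * (of_nat (level n Q) * Q $$ (i, j))" by simp
  ultimately show ?thesis by (metis Ints_mult Ints_of_nat)
qed

lemma orthonormal_level_of_rat_orthogonal:
  assumes "rat_orthogonal n Q" "level n Q dvd l" "0 < l"
  shows "orthonormal_level n l (\<lambda>i j. Q $$ (i, j))"
  using assms rat_orthogonal_cols rat_orthogonal_rows level_integral
  by unfold_locales auto

section \<open>Adjacency sums\<close>

definition adj_apply :: "nat \<Rightarrow> nat set set \<Rightarrow> (nat \<Rightarrow> rat) \<Rightarrow> nat \<Rightarrow> rat" where
  "adj_apply n E y a = (\<Sum>b<n. if {a, b} \<in> E then y b else 0)"

definition adj_form :: "nat \<Rightarrow> nat set set \<Rightarrow> (nat \<Rightarrow> rat) \<Rightarrow> (nat \<Rightarrow> rat) \<Rightarrow> rat" where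
  "adj_form n E x y = (\<Sum>a<n. x a * adj_apply n E y a)"

lemma adj_apply_cong_edges:
  assumes "\<And>b. b < n \<Longrightarrow> y b \<noteq> 0 \<Longrightarrow> {a, b} \<in> E \<longleftrightarrow> {a, b} \<in> E'"
  shows "adj_apply n E y a = adj_apply n E' y a"
  unfolding adj_apply_def using assms by (intro sum.cong refl) auto

lemma adj_form_cong_edges:
  assumes "\<And>a b. a < n \<Longrightarrow> b < n \<Longrightarrow> x a \<noteq> 0 \<Longrightarrow> y b \<noteq> 0 \<Longrightarrow> {a, b} \<in> E \<longleftrightarrow> {a, b} \<in> E'"
  shows "adj_form n E x y = adj_form n E' x y"
  unfolding adj_form_def
proof (intro sum.cong refl)
  fix a assume "a \<in> {..<n}"
  then show "x a * adj_apply n E y a = x a * adj_apply n E' y a"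
    using assms adj_apply_cong_edges[of n y a E E'] by (cases "x a = 0") auto
qed

lemma adj_form_cong:
  assumes "\<And>a. a < n \<Longrightarrow> x a = x' a" "\<And>b. b < n \<Longrightarrow> y b = y' b"
  shows "adj_form n E x y = adj_form n E x' y'"
proof -
  have "adj_apply n E y a = adj_apply n E y' a" for a
    unfolding adj_apply_def using assms(2) by (intro sum.cong) auto
  then show ?thesis unfolding adj_form_def using assms(1) by (intro sum.cong) auto
qed

lemma adj_apply_toggle:
  assumes "u \<noteq> v" "u < n" "v < n"
  shows "adj_apply n (insert {u, v} E) y a
    = adj_apply n (E - {{u, v}}) y a + (if a = u then y v else if a = v then y u else 0)"
proof -
  have "(if {a, b} \<in> insert {u, v} E then y b else 0)
      = (if {a, b} \<in> E - {{u, v}} then y b else 0)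
        + (if a = u then (if b = v then y v else 0) else if a = v then (if b = u then y u else 0) else 0)"
    for b
    using assms(1) by (auto simp: doubleton_eq_iff)
  then show ?thesis
    unfolding adj_apply_def using assms(2,3) by (simp add: sum.distrib)
qed

lemma adj_form_toggle:
  assumes "u \<noteq> v" "u < n" "v < n"
  shows "adj_form n (insert {u, v} E) x y = adj_form n (E - {{u, v}}) x y + x u * y v + x v * y u"
proof -
  have "x a * (if a = u then y v else if a = v then y u else 0)
      = (if a = u then x u * y v else 0) + (if a = v then x v * y u else 0)" for a
    using assms(1) by auto
  then show ?thesis
    unfolding adj_form_def adj_apply_toggle[OF assms]
    using assms(2,3) by (simp add: distrib_left sum.distrib)
qed

lemma adj_apply_single:
  assumes "v < n" "\<And>b. b < n \<Longrightarrow> b \<noteq> v \<Longrightarrow> y b = 0"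
  shows "adj_apply n E y a = (if {a, v} \<in> E then y v else 0)"
proof -
  have "adj_apply n E y a = (\<Sum>b<n. if b = v then (if {a, v} \<in> E then y v else 0) else 0)"
    unfolding adj_apply_def using assms(2) by (intro sum.cong refl) auto
  then show ?thesis using assms(1) by simp
qed

lemma adj_form_single_left:
  assumes "w < n" "\<And>a. a < n \<Longrightarrow> a \<noteq> w \<Longrightarrow> x a = 0"
  shows "adj_form n E x y = x w * adj_apply n E y w"
proof -
  have "adj_form n E x y = (\<Sum>a<n. if a = w then x w * adj_apply n E y w else 0)"
    unfolding adj_form_def using assms(2) by (intro sum.cong refl) auto
  then show ?thesis using assms(1) by simp
qed

lemma conj_adj_mat_entry:
  assumes "Q \<in> carrier_mat n n" "j < n" "k < n"
  shows "(transpose_mat Q * adj_mat n E * Q) $$ (j, k)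
    = adj_form n E (\<lambda>a. Q $$ (a, j)) (\<lambda>b. Q $$ (b, k))"
proof -
  have "(transpose_mat Q * adj_mat n E * Q) $$ (j, k)
      = (\<Sum>b<n. (\<Sum>a<n. Q $$ (a, j) * (if {a, b} \<in> E then 1 else 0)) * Q $$ (b, k))"
    using assms by (simp add: scalar_prod_def lessThan_atLeast0 adj_mat_def)
  also have "\<dots> = (\<Sum>b<n. \<Sum>a<n. Q $$ (a, j) * (if {a, b} \<in> E then Q $$ (b, k) else 0))"
    by (intro sum.cong refl) (auto simp: sum_distrib_right intro!: sum.cong)
  also have "\<dots> = (\<Sum>a<n. \<Sum>b<n. Q $$ (a, j) * (if {a, b} \<in> E then Q $$ (b, k) else 0))"
    by (rule sum.swap)
  also have "\<dots> = adj_form n E (\<lambda>a. Q $$ (a, j)) (\<lambda>b. Q $$ (b, k))"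
    unfolding adj_form_def adj_apply_def sum_distrib_left ..
  finally show ?thesis .
qed

lemma graph_iso_if_edge_iff:
  assumes "bij_betw \<pi> {..<n} {..<n}" "E \<in> graphs n" "F \<in> graphs n"
    and "\<And>i j. i < n \<Longrightarrow> j < n \<Longrightarrow> {\<pi> i, \<pi> j} \<in> F \<longleftrightarrow> {i, j} \<in> E"
  shows "graph_iso n E F"
proof -
  have edges: "E \<subseteq> all_edges n" "F \<subseteq> all_edges n" using assms(2,3) by (auto simp: graphs_def)
  have "F = (\<lambda>e. \<pi> ` e) ` E"
  proof (intro equalityI subsetI)
    fix f assume "f \<in> F"
    then obtain c d where cd: "f = {c, d}" "c < n" "d < n" using edges(2) by (auto simp: all_edges_def)
    then obtain i j where "i < n" "j < n" "c = \<pi> i" "d = \<pi> j"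
      using bij_betw_imp_surj_on[OF assms(1)] by (metis imageE lessThan_iff)
    then show "f \<in> (\<lambda>e. \<pi> ` e) ` E"
      using assms(4) \<open>f \<in> F\<close> cd(1) by (intro image_eqI[of _ _ "{i, j}"]) auto
  next
    fix f assume "f \<in> (\<lambda>e. \<pi> ` e) ` E"
    then obtain i j where "{i, j} \<in> E" "i < n" "j < n" "f = {\<pi> i, \<pi> j}"
      using edges(1) by (auto simp: all_edges_def)
    then show "f \<in> F" using assms(4) by simp
  qed
  then show ?thesis using assms(1) unfolding graph_iso_def by (auto simp: lessThan_atLeast0)
qed

section \<open>Conjugating an adjacency matrix\<close>

locale adjacency_conjugation = orthonormal_level +
  fixes E F :: "nat set set"
  assumes conj_adj_mat:
    "\<And>j k. j < n \<Longrightarrow> k < n \<Longrightarrow> adj_form n E (col_fun j) (col_fun k) = (if {j, k} \<in> F then 1 else 0)"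
begin

lemma adj_form_cols_Ints: "j < n \<Longrightarrow> k < n \<Longrightarrow> adj_form n E (col_fun j) (col_fun k) \<in> \<int>"
  using conj_adj_mat by simp

lemma adj_apply_col_Ints:
  assumes "w \<in> unit_rows" "j < n"
  shows "adj_apply n E (col_fun j) w \<in> \<int>"
proof -
  obtain c where c: "w < n" "c < n" "\<bar>q w c\<bar> = 1" using assms(1) unfolding unit_rows_def by blast
  have zero: "col_fun c a = 0" if "a \<noteq> w" for a
    using that unit_entry_col[OF c, of a] by (simp add: col_fun_def)
  have "adj_form n E (col_fun c) (col_fun j) = col_fun c w * adj_apply n E (col_fun j) w"
    by (rule adj_form_single_left) (use c(1) zero in auto)
  then have "q w c * (if {c, j} \<in> F then 1 else 0) = q w c * q w c * adj_apply n E (col_fun j) w"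
    using conj_adj_mat[OF c(2) assms(2)] c(1) by (simp add: col_fun_def)
  moreover have "q w c = 1 \<or> q w c = -1" using c(3) by arith
  ultimately have "adj_apply n E (col_fun j) w = q w c * (if {c, j} \<in> F then 1 else 0)"
    by auto
  also have "\<dots> \<in> \<int>" using \<open>q w c = 1 \<or> q w c = -1\<close> by auto
  finally show ?thesis .
qed

lemma graph_iso_if_unit_rows_all:
  assumes "E \<in> graphs n" "F \<in> graphs n" "unit_rows = {..<n}"
  shows "graph_iso n E F"
proof -
  obtain \<pi> where \<pi>: "bij_betw \<pi> {..<n} {..<n}" "\<And>i. i < n \<Longrightarrow> \<bar>q i (\<pi> i)\<bar> = 1"
    using unit_rows_all_imp_perm[OF assms(3)] by blast
  have \<pi>_lt: "\<pi> i < n" if "i < n" for i using \<pi>(1) that by (auto dest: bij_betwE)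
  have zero: "col_fun (\<pi> i) a = 0" if "i < n" "a \<noteq> i" for i a
    using unit_entry_col[OF that(1) \<pi>_lt[OF that(1)] \<pi>(2)[OF that(1)], of a] that(2)
    by (simp add: col_fun_def)
  have "{\<pi> i, \<pi> j} \<in> F \<longleftrightarrow> {i, j} \<in> E" if "i < n" "j < n" for i j
  proof -
    have "adj_form n E (col_fun (\<pi> i)) (col_fun (\<pi> j))
        = col_fun (\<pi> i) i * adj_apply n E (col_fun (\<pi> j)) i"
      by (rule adj_form_single_left) (use that zero in auto)
    moreover have "adj_apply n E (col_fun (\<pi> j)) i = (if {i, j} \<in> E then col_fun (\<pi> j) j else 0)"
      by (rule adj_apply_single) (use that zero in auto)
    moreover have "col_fun (\<pi> i) i = q i (\<pi> i)" "col_fun (\<pi> j) j = q j (\<pi> j)"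
      using that by (simp_all add: col_fun_def)
    ultimately have "adj_form n E (col_fun (\<pi> i)) (col_fun (\<pi> j))
        = q i (\<pi> i) * (if {i, j} \<in> E then q j (\<pi> j) else 0)"
      by simp
    then have "\<bar>if {\<pi> i, \<pi> j} \<in> F then 1 else 0\<bar> = (if {i, j} \<in> E then 1 else (0::rat))"
      using conj_adj_mat[of "\<pi> i" "\<pi> j"] \<pi>(2) \<pi>_lt that by (simp add: abs_mult)
    then show ?thesis by (auto split: if_splits)
  qed
  then show ?thesis using graph_iso_if_edge_iff[OF \<pi>(1) assms(1,2)] by blast
qed

end

lemma adjacency_conjugation_of_conj:
  assumes "rat_orthogonal n Q" "level n Q dvd l" "0 < l"
    and "transpose_mat Q * adj_mat n E * Q = adj_mat n F"
  shows "adjacency_conjugation n l (\<lambda>i j. Q $$ (i, j)) E F"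
proof -
  interpret orthonormal_level n l "\<lambda>i j. Q $$ (i, j)"
    by (rule orthonormal_level_of_rat_orthogonal[OF assms(1-3)])
  show ?thesis
  proof (intro adjacency_conjugation.intro adjacency_conjugation_axioms.intro)
    show "orthonormal_level n l (\<lambda>i j. Q $$ (i, j))" ..
    fix j k assume jk: "j < n" "k < n"
    have "adj_form n E (col_fun j) (col_fun k) = adj_form n E (\<lambda>a. Q $$ (a, j)) (\<lambda>b. Q $$ (b, k))"
      by (rule adj_form_cong) (simp_all add: col_fun_def)
    also have "\<dots> = (transpose_mat Q * adj_mat n E * Q) $$ (j, k)"
      using assms(1) jk by (simp add: conj_adj_mat_entry rat_orthogonal_def)
    also have "\<dots> = (if {j, k} \<in> F then 1 else 0)"
      using assms(4) jk by (simp add: adj_mat_def)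
    finally show "adj_form n E (col_fun j) (col_fun k) = (if {j, k} \<in> F then 1 else 0)" .
  qed
qed

section \<open>Certificates\<close>

definition nonzeros :: "(nat \<Rightarrow> rat) \<Rightarrow> nat set" where
  "nonzeros x = {u. x u \<noteq> 0}"

(* T stands for the rows of Q with an entry +-1, xs for columns of Q with disjoint supports
   outside T. *)
definition certificate :: "nat \<Rightarrow> nat set \<Rightarrow> (nat \<Rightarrow> rat) list \<Rightarrow> bool" where
  "certificate n T xs \<longleftrightarrow> T \<subseteq> {..<n} \<and>
     (\<forall>x\<in>set xs. nonzeros x \<noteq> {} \<and> nonzeros x \<subseteq> {..<n} - T \<and> (\<forall>u. \<bar>x u\<bar> < 1)) \<and>
     disjoint_family_on (\<lambda>i. nonzeros (xs ! i)) {..<length xs}"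

definition constraints :: "nat set \<Rightarrow> nat \<Rightarrow> ((nat \<times> nat) + (nat \<times> nat)) set" where
  "constraints T k = Inl ` ({..<k} \<times> T) \<union> Inr ` ({..<k div 2} \<times> {k div 2..<k})"

fun constraint :: "nat \<Rightarrow> (nat \<Rightarrow> rat) list \<Rightarrow> (nat \<times> nat) + (nat \<times> nat) \<Rightarrow> nat set set \<Rightarrow> bool" where
  "constraint n xs (Inl (i, w)) E \<longleftrightarrow> adj_apply n E (xs ! i) w \<in> \<int>"
| "constraint n xs (Inr (i, j)) E \<longleftrightarrow> adj_form n E (xs ! i) (xs ! j) \<in> \<int>"

definition certified :: "nat \<Rightarrow> nat set \<Rightarrow> (nat \<Rightarrow> rat) list \<Rightarrow> nat set set \<Rightarrow> bool" where
  "certified n T xs E \<longleftrightarrow> certificate n T xs \<and> (\<forall>c\<in>constraints T (length xs). constraint n xs c E)"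

lemma constraint_eq:
  "constraint n xs (Inl (i, w)) = (\<lambda>E. adj_apply n E (xs ! i) w \<in> \<int>)"
  "constraint n xs (Inr (i, j)) = (\<lambda>E. adj_form n E (xs ! i) (xs ! j) \<in> \<int>)"
  by (simp_all add: fun_eq_iff)

lemma constraints_cases:
  assumes "c \<in> constraints T k"
  obtains (vertex) i w where "c = Inl (i, w)" "i < k" "w \<in> T"
    | (pair) i j where "c = Inr (i, j)" "i < k div 2" "k div 2 \<le> j" "j < k"
  using assms unfolding constraints_def by auto

lemma finite_constraints: "finite T \<Longrightarrow> finite (constraints T k)"
  unfolding constraints_def by simp

lemma card_constraints:
  assumes "finite T"
  shows "card (constraints T k) = k * card T + (k div 2) * (k - k div 2)"
proof -
  have "card (Inl ` ({..<k} \<times> T) :: ((nat \<times> nat) + (nat \<times> nat)) set) = k * card T"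
    by (simp add: card_image card_cartesian_product)
  moreover have "card (Inr ` ({..<k div 2} \<times> {k div 2..<k}) :: ((nat \<times> nat) + (nat \<times> nat)) set)
      = (k div 2) * (k - k div 2)"
    by (simp add: card_image card_cartesian_product)
  ultimately show ?thesis
    unfolding constraints_def using assms by (subst card_Un_disjoint) auto
qed

lemma toggle_exclusive_Ints:
  assumes "\<And>E. f (insert e E) = f (E - {e}) + d" "d \<notin> \<int>"
  shows "toggle_exclusive e (\<lambda>E. f E \<in> \<int>)"
  unfolding toggle_exclusive_def
proof (intro allI notI)
  fix E assume "f (insert e E) \<in> \<int> \<and> f (E - {e}) \<in> \<int>"
  then have "f (insert e E) - f (E - {e}) \<in> \<int>" by (intro Ints_diff) auto
  then show False using assms by simp
qed

lemma insensitive_to_adj_apply: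
  assumes "\<And>u. u < n \<Longrightarrow> x u \<noteq> 0 \<Longrightarrow> {w, u} \<noteq> e"
  shows "insensitive_to e (\<lambda>E. adj_apply n E x w \<in> \<int>)"
  unfolding insensitive_to_def
  using adj_apply_cong_edges[of n x w "insert e _" "_ - {e}"] assms by auto

lemma insensitive_to_adj_form:
  assumes "\<And>a b. a < n \<Longrightarrow> b < n \<Longrightarrow> x a \<noteq> 0 \<Longrightarrow> y b \<noteq> 0 \<Longrightarrow> {a, b} \<noteq> e"
  shows "insensitive_to e (\<lambda>E. adj_form n E x y \<in> \<int>)"
  unfolding insensitive_to_def
  using adj_form_cong_edges[of n x y "insert e _" "_ - {e}"] assms by auto

locale valid_certificate =
  fixes n :: nat and T :: "nat set" and xs :: "(nat \<Rightarrow> rat) list"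
  assumes certificate: "certificate n T xs"
begin

abbreviation k :: nat where "k \<equiv> length xs"

definition rep :: "nat \<Rightarrow> nat" where
  "rep i = (SOME u. u \<in> nonzeros (xs ! i))"

(* Toggling the pivot edge of a constraint shifts its value by a non-integer, and no other
   constraint reads that edge. *)
fun pivot :: "(nat \<times> nat) + (nat \<times> nat) \<Rightarrow> nat set" where
  "pivot (Inl (i, w)) = {w, rep i}"
| "pivot (Inr (i, j)) = {rep i, rep j}"

lemma T_subset: "T \<subseteq> {..<n}"
  using certificate unfolding certificate_def by blast

lemma nonzero_entry: "i < k \<Longrightarrow> (xs ! i) u \<noteq> 0 \<Longrightarrow> u < n \<and> u \<notin> T"
  using certificate nth_mem unfolding certificate_def nonzeros_def by blast

lemma entry_abs_lt_1: "i < k \<Longrightarrow> \<bar>(xs ! i) u\<bar> < 1"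
  using certificate nth_mem unfolding certificate_def by blast

lemma rep_nonzero: "i < k \<Longrightarrow> (xs ! i) (rep i) \<noteq> 0"
proof -
  assume "i < k"
  then have "\<exists>u. u \<in> nonzeros (xs ! i)"
    using certificate nth_mem unfolding certificate_def by blast
  then show ?thesis unfolding rep_def by (rule someI2_ex) (simp add: nonzeros_def)
qed

lemma rep_unique: "i < k \<Longrightarrow> j < k \<Longrightarrow> (xs ! i) (rep j) \<noteq> 0 \<Longrightarrow> i = j"
  using certificate rep_nonzero[of j] unfolding certificate_def disjoint_family_on_def nonzeros_def by blast

lemma rep_not_Ints: "i < k \<Longrightarrow> (xs ! i) (rep i) \<notin> \<int>"
  using rep_nonzero entry_abs_lt_1 Ints_nonzero_abs_less1 by blast

lemma pivot_edge:
  assumes "c \<in> constraints T k"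
  shows "pivot c \<in> all_edges n"
  using assms
proof (cases rule: constraints_cases)
  case (vertex i w)
  then have "w < n" "rep i < n" "rep i \<notin> T" using T_subset nonzero_entry rep_nonzero by auto
  then show ?thesis using vertex unfolding all_edges_def by auto
next
  case (pair i j)
  then have "i < k" "j < k" "i \<noteq> j" by auto
  then have "rep i < n" "rep j < n" "rep i \<noteq> rep j"
    using nonzero_entry rep_nonzero rep_unique by metis+
  then show ?thesis using pair unfolding all_edges_def by auto
qed

lemma toggle_exclusive_pivot:
  assumes "c \<in> constraints T k"
  shows "toggle_exclusive (pivot c) (constraint n xs c)"
  using assms
proof (cases rule: constraints_cases)
  case (vertex i w)
  have "w \<noteq> rep i" "rep i < n" using vertex nonzero_entry rep_nonzero by auto
  then have "adj_apply n (insert {w, rep i} E) (xs ! i) w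
      = adj_apply n (E - {{w, rep i}}) (xs ! i) w + (xs ! i) (rep i)" for E
    using vertex T_subset by (subst adj_apply_toggle) auto
  then have "toggle_exclusive {w, rep i} (\<lambda>E. adj_apply n E (xs ! i) w \<in> \<int>)"
    by (rule toggle_exclusive_Ints) (use vertex rep_not_Ints in blast)
  then show ?thesis using vertex by (simp add: constraint_eq)
next
  case (pair i j)
  then have ij: "i < k" "j < k" "i \<noteq> j" by auto
  then have "rep i \<noteq> rep j" "rep i < n" "rep j < n" "(xs ! i) (rep j) = 0" "(xs ! j) (rep i) = 0"
    using nonzero_entry rep_nonzero rep_unique by metis+
  then have toggle: "adj_form n (insert {rep i, rep j} E) (xs ! i) (xs ! j)
      = adj_form n (E - {{rep i, rep j}}) (xs ! i) (xs ! j) + (xs ! i) (rep i) * (xs ! j) (rep j)" for E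
    by (subst adj_form_toggle) auto
  have "(xs ! i) (rep i) * (xs ! j) (rep j) \<notin> \<int>"
  proof (rule notI)
    assume "(xs ! i) (rep i) * (xs ! j) (rep j) \<in> \<int>"
    moreover have "\<bar>(xs ! i) (rep i) * (xs ! j) (rep j)\<bar> < 1"
      unfolding abs_mult using entry_abs_lt_1 ij(1,2) by (intro abs_mult_less[of _ 1 _ 1, simplified]) auto
    ultimately show False using Ints_nonzero_abs_less1 rep_nonzero ij(1,2) by fastforce
  qed
  with toggle have "toggle_exclusive {rep i, rep j} (\<lambda>E. adj_form n E (xs ! i) (xs ! j) \<in> \<int>)"
    by (rule toggle_exclusive_Ints)
  then show ?thesis using pair by (simp add: constraint_eq)
qed

lemma pivot_not_vertex_edge:
  assumes "Inl (i, w) \<in> constraints T k" "c' \<in> constraints T k" "Inl (i, w) \<noteq> c'"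
    and "(xs ! i) u \<noteq> 0"
  shows "{w, u} \<noteq> pivot c'"
proof -
  have "i < k" "w \<in> T" using assms(1) by (auto simp: constraints_def)
  then have "u \<notin> T" using nonzero_entry assms(4) by blast
  from assms(2) show ?thesis
  proof (cases rule: constraints_cases)
    case (vertex i' w')
    then have "rep i' \<notin> T" using nonzero_entry rep_nonzero by blast
    then show ?thesis
      using vertex \<open>i < k\<close> \<open>w \<in> T\<close> \<open>u \<notin> T\<close> assms(3,4) rep_unique
      by (auto simp: doubleton_eq_iff)
  next
    case (pair i' j')
    then have "i' < k" "j' < k" by auto
    then have "rep i' \<notin> T" "rep j' \<notin> T" using nonzero_entry rep_nonzero by auto
    then show ?thesis using pair \<open>w \<in> T\<close> by (auto simp: doubleton_eq_iff)
  qed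
qed

lemma pivot_not_pair_edge:
  assumes "Inr (i, j) \<in> constraints T k" "c' \<in> constraints T k" "Inr (i, j) \<noteq> c'"
    and "(xs ! i) a \<noteq> 0" "(xs ! j) b \<noteq> 0"
  shows "{a, b} \<noteq> pivot c'"
proof -
  have ij: "i < k div 2" "k div 2 \<le> j" "j < k" using assms(1) by (auto simp: constraints_def)
  then have "i < k" by simp
  from assms(2) show ?thesis
  proof (cases rule: constraints_cases)
    case (vertex i' w')
    have "a \<notin> T" "b \<notin> T"
      using nonzero_entry[OF \<open>i < k\<close> assms(4)] nonzero_entry[OF ij(3) assms(5)] by auto
    then show ?thesis using vertex by (auto simp: doubleton_eq_iff)
  next
    case (pair i' j')
    have "i' < k" "j' < k" "i \<noteq> j'" using ij pair by auto
    then show ?thesis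
      using rep_unique[OF \<open>i < k\<close> \<open>i' < k\<close>] rep_unique[OF \<open>i < k\<close> \<open>j' < k\<close>]
        rep_unique[OF ij(3) \<open>j' < k\<close>] pair assms(3-5)
      by (auto simp: doubleton_eq_iff)
  qed
qed

lemma insensitive_to_pivot:
  assumes c: "c \<in> constraints T k" and "c' \<in> constraints T k" "c \<noteq> c'"
  shows "insensitive_to (pivot c') (constraint n xs c)"
  using c
proof (cases rule: constraints_cases)
  case (vertex i w)
  then show ?thesis
    using assms pivot_not_vertex_edge insensitive_to_adj_apply by (simp add: constraint_eq)
next
  case (pair i j)
  then show ?thesis
    using assms pivot_not_pair_edge insensitive_to_adj_form by (simp add: constraint_eq)
qed

end

lemma subset_prob_certified_le:
  assumes "0 \<le> p" "p \<le> 1"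
  shows "subset_prob p (all_edges n) (certified n T xs) \<le> max p (1 - p) ^ card (constraints T (length xs))"
proof (cases "certificate n T xs")
  case False
  then show ?thesis by (simp add: subset_prob_def certified_def)
next
  case True
  interpret valid_certificate n T xs by unfold_locales (rule True)
  have "finite (all_edges n)"
    by (rule finite_subset[of _ "Pow {..<n}"]) (auto simp: all_edges_def)
  moreover have "finite (constraints T k)"
    using T_subset finite_subset by (intro finite_constraints) blast
  ultimately have "subset_prob p (all_edges n) (\<lambda>E. \<forall>c\<in>constraints T k. constraint n xs c E)
      \<le> max p (1 - p) ^ card (constraints T k)"
    using assms pivot_edge toggle_exclusive_pivot insensitive_to_pivot
    by (intro subset_prob_Ball_le[where pivot = pivot]) auto
  moreover have "subset_prob p (all_edges n) (certified n T xs)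
      \<le> subset_prob p (all_edges n) (\<lambda>E. \<forall>c\<in>constraints T k. constraint n xs c E)"
    using assms by (intro subset_prob_mono) (auto simp: certified_def)
  ultimately show ?thesis by linarith
qed

definition level_grid :: "nat \<Rightarrow> rat set" where
  "level_grid l = (\<lambda>a. of_int a / of_nat l) ` {-int l..int l}"

definition sparse_vectors :: "nat \<Rightarrow> nat \<Rightarrow> (nat \<Rightarrow> rat) set" where
  "sparse_vectors n l =
     {x. nonzeros x \<subseteq> {..<n} \<and> card (nonzeros x) \<le> l ^ 2 \<and> range x \<subseteq> level_grid l}"

context orthonormal_level
begin

lemma nonzeros_col_fun: "nonzeros (col_fun j) = col_support j"
  by (auto simp: nonzeros_def col_fun_def col_support_def)

lemma col_fun_sparse:
  assumes "j < n"
  shows "col_fun j \<in> sparse_vectors n l"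
proof -
  have "col_fun j a \<in> level_grid l" for a
  proof (cases "a < n")
    case True
    from level_integral[OF True assms] obtain z where z: "of_nat l * q a j = of_int z"
      by (auto elim: Ints_cases)
    have "\<bar>of_int z\<bar> \<le> (of_nat l :: rat)"
      unfolding z[symmetric] abs_mult using abs_entry_le_1[OF True assms] by (simp add: mult_left_le)
    then have "\<bar>z\<bar> \<le> int l" by (metis of_int_abs of_int_le_iff of_int_of_nat_eq)
    then have "z \<in> {-int l..int l}" by auto
    moreover have "col_fun j a = of_int z / of_nat l"
      using z True level_pos by (simp add: col_fun_def field_simps)
    ultimately show ?thesis unfolding level_grid_def by blast
  next
    case False
    then have "col_fun j a = of_int 0 / of_nat l" by (simp add: col_fun_def)
    then show ?thesis unfolding level_grid_def by force
  qed
  then show ?thesis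
    using card_col_support_le[OF assms] nonzeros_col_fun
    by (auto simp: sparse_vectors_def col_support_def)
qed

end

context adjacency_conjugation
begin

lemma certified_cols:
  assumes "set cs \<subseteq> nonunit_cols" "distinct cs" "disjoint_family_on col_support (set cs)"
  shows "certified n unit_rows (map col_fun cs) E"
proof -
  have cs: "c < n" if "c \<in> set cs" for c
    using that assms(1) unfolding nonunit_cols_def by auto
  have "\<bar>col_fun c u\<bar> < 1" if "c \<in> set cs" for c u
    using that assms(1) nonunit_col_abs_lt_1 by (cases "u < n") (auto simp: col_fun_def)
  moreover have "nonzeros (col_fun c) \<noteq> {}" if "c \<in> set cs" for c
    using col_support_nonempty[OF cs[OF that]] by (simp add: nonzeros_col_fun)
  moreover have "nonzeros (col_fun c) \<subseteq> {..<n} - unit_rows" if "c \<in> set cs" for c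
  proof -
    have "col_support c \<inter> unit_rows = {}"
      using that assms(1) nonunit_col_support_disjoint by blast
    then show ?thesis unfolding nonzeros_col_fun col_support_def by blast
  qed
  moreover have "disjoint_family_on (\<lambda>i. nonzeros (map col_fun cs ! i)) {..<length cs}"
    using assms(2,3) unfolding disjoint_family_on_def
    by (auto simp: nonzeros_col_fun nth_eq_iff_index_eq)
  ultimately have "certificate n unit_rows (map col_fun cs)"
    unfolding certificate_def unit_rows_def by auto
  moreover have "constraint n (map col_fun cs) c E" if "c \<in> constraints unit_rows (length cs)" for c
    using that
  proof (cases rule: constraints_cases)
    case (vertex i w)
    then show ?thesis using adj_apply_col_Ints cs by simp
  next
    case (pair i j)
    then show ?thesis using adj_form_cols_Ints cs by simp
  qed
  ultimately show ?thesis unfolding certified_def by simp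
qed

end

definition ceil_div :: "nat \<Rightarrow> nat \<Rightarrow> nat" where
  "ceil_div m d = (m + d - 1) div d"

lemma ceil_div_le:
  assumes "0 < d" "m \<le> d * c"
  shows "ceil_div m d \<le> c"
proof -
  have "m + d - 1 < d * c + d" using assms by linarith
  also have "d * c + d = (c + 1) * d" by (simp add: algebra_simps)
  finally have "(m + d - 1) div d < c + 1" by (rule less_mult_imp_div_less)
  then show ?thesis unfolding ceil_div_def by simp
qed

lemma le_mult_ceil_div:
  assumes "0 < d"
  shows "m \<le> d * ceil_div m d"
proof -
  have "m + d - 1 = d * ((m + d - 1) div d) + (m + d - 1) mod d" by simp
  moreover have "(m + d - 1) mod d < d" using assms by simp
  ultimately show ?thesis unfolding ceil_div_def by linarith
qed

lemma ceil_div_pos: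
  assumes "0 < d" "0 < m"
  shows "0 < ceil_div m d"
proof -
  have "d div d \<le> (m + d - 1) div d" using assms by (intro div_le_mono) simp
  then show ?thesis unfolding ceil_div_def using assms by simp
qed

lemma certificate_of_mate:
  assumes "cospectral_mate_level n E F l'" "l' dvd l" "0 < l" "E \<in> graphs n"
  obtains T xs where "T \<subset> {..<n}" "length xs = ceil_div (n - card T) (l ^ 4)"
    "set xs \<subseteq> sparse_vectors n l" "certified n T xs E"
proof -
  obtain Q where F: "F \<in> graphs n" "\<not> graph_iso n E F" "rat_orthogonal n Q" "level n Q = l'"
      "transpose_mat Q * adj_mat n E * Q = adj_mat n F"
    using assms(1) unfolding cospectral_mate_level_def by blast
  interpret adjacency_conjugation n l "\<lambda>i j. Q $$ (i, j)" E F
    using adjacency_conjugation_of_conj F(3-5) assms(2,3) by blast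
  have "unit_rows \<subset> {..<n}"
    using graph_iso_if_unit_rows_all[OF assms(4) F(1)] F(2) unfolding unit_rows_def by blast
  obtain J where J: "J \<subseteq> nonunit_cols" "disjoint_family_on col_support J"
      "n - card unit_rows \<le> l ^ 4 * card J"
    using exists_disjoint_nonunit_cols by (elim exE conjE)
  have "finite J" using J(1) by (rule finite_subset) (simp add: nonunit_cols_def)
  define k where "k = ceil_div (n - card unit_rows) (l ^ 4)"
  have "k \<le> card J" unfolding k_def using J(3) assms(3) by (intro ceil_div_le) auto
  then obtain J' where J': "J' \<subseteq> J" "card J' = k" by (meson obtain_subset_with_card_n)
  define cs where "cs = sorted_list_of_set J'"
  have "finite J'" using J'(1) \<open>finite J\<close> finite_subset by blast
  then have cs: "set cs = J'" "distinct cs" "length cs = k"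
    unfolding cs_def using J'(2) by auto
  have "certified n unit_rows (map col_fun cs) E"
    using J J' cs by (intro certified_cols) (auto intro: disjoint_family_on_mono)
  moreover have "set (map col_fun cs) \<subseteq> sparse_vectors n l"
    using J(1) J'(1) cs(1) col_fun_sparse unfolding nonunit_cols_def by auto
  ultimately show ?thesis
    using \<open>unit_rows \<subset> {..<n}\<close> cs(3) unfolding k_def
    by (intro that[of unit_rows "map col_fun cs"]) simp_all
qed

section \<open>Counting certificates\<close>

definition fun_of_pairs :: "(nat \<times> rat) list \<Rightarrow> nat \<Rightarrow> rat" where
  "fun_of_pairs ps u = (case map_of ps u of Some v \<Rightarrow> v | None \<Rightarrow> 0)"

lemma card_level_grid_le: "card (level_grid l) \<le> 2 * l + 1"
proof -
  have "card (level_grid l) \<le> card {-int l..int l}"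
    unfolding level_grid_def by (rule card_image_le) simp
  then show ?thesis by simp
qed

lemma map_of_replicate: "map_of (replicate j (a, b)) u = (if u = a \<and> 0 < j then Some b else None)"
  by (induction j) auto

lemma sparse_vectors_subset_image:
  assumes "0 < n"
  shows "sparse_vectors n l
    \<subseteq> fun_of_pairs ` {ps. set ps \<subseteq> {..<n} \<times> level_grid l \<and> length ps = l ^ 2}"
proof
  fix x assume x: "x \<in> sparse_vectors n l"
  define S where "S = nonzeros x"
  have S: "S \<subseteq> {..<n}" "card S \<le> l ^ 2" "finite S" "\<And>u. x u \<in> level_grid l"
    using x finite_subset unfolding sparse_vectors_def S_def by auto
  define ps where
    "ps = map (\<lambda>u. (u, x u)) (sorted_list_of_set S) @ replicate (l ^ 2 - card S) (0, x 0)"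
  have "fun_of_pairs ps u = x u" for u
  proof (cases "u \<in> S")
    case True
    then show ?thesis using S(3)
      by (simp add: fun_of_pairs_def ps_def map_of_append map_add_def map_of_map_restrict)
  next
    case False
    then have "x u = 0" unfolding S_def nonzeros_def by simp
    moreover have "map_of (map (\<lambda>u. (u, x u)) (sorted_list_of_set S)) u = None"
      using False S(3) by (simp add: map_of_map_restrict)
    ultimately show ?thesis
      by (cases "u = 0") (simp_all add: fun_of_pairs_def ps_def map_of_append map_add_def map_of_replicate)
  qed
  moreover have "set ps \<subseteq> {..<n} \<times> level_grid l" "length ps = l ^ 2"
    using S assms unfolding ps_def by auto
  ultimately show "x \<in> fun_of_pairs ` {ps. set ps \<subseteq> {..<n} \<times> level_grid l \<and> length ps = l ^ 2}"
    by (intro image_eqI[of _ _ ps]) auto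
qed

lemma finite_sparse_vectors:
  assumes "0 < n"
  shows "finite (sparse_vectors n l)"
proof -
  have "finite ({..<n} \<times> level_grid l)" by (simp add: level_grid_def)
  then show ?thesis
    using sparse_vectors_subset_image[OF assms] finite_lists_length_eq finite_subset by blast
qed

lemma card_sparse_vectors_le:
  assumes "0 < n"
  shows "card (sparse_vectors n l) \<le> (n * (2 * l + 1)) ^ l ^ 2"
proof -
  let ?L = "{ps. set ps \<subseteq> {..<n} \<times> level_grid l \<and> length ps = l ^ 2}"
  have fin: "finite ({..<n} \<times> level_grid l)" by (simp add: level_grid_def)
  have "card (sparse_vectors n l) \<le> card (fun_of_pairs ` ?L)"
    using sparse_vectors_subset_image[OF assms] finite_lists_length_eq[OF fin]
    by (intro card_mono) auto
  also have "\<dots> \<le> card ?L" using finite_lists_length_eq[OF fin] by (rule card_image_le)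
  also have "\<dots> = (n * card (level_grid l)) ^ l ^ 2"
    using card_lists_length_eq[OF fin] by (simp add: card_cartesian_product)
  also have "\<dots> \<le> (n * (2 * l + 1)) ^ l ^ 2"
    by (intro power_mono mult_le_mono2 card_level_grid_le) simp
  finally show ?thesis .
qed

(* Either t \<ge> (t + m) / 2, or k \<ge> m / G > (t + m) / (2 * G) and the pair constraints suffice. *)
lemma constraint_count_ge:
  fixes t m k G :: nat
  assumes "m \<le> G * k" "0 < G"
  shows "k * ((t + m) div (8 * G)) \<le> k * t + (k div 2) * (k - k div 2)"
proof (cases "2 * m \<le> t + m")
  case True
  have "(t + m) div (8 * G) \<le> (t + m) div 8" using assms(2) by (simp add: div_le_mono2)
  also have "\<dots> \<le> t" using True by linarith
  finally show ?thesis by (simp add: add_increasing2)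
next
  case False
  let ?M = "(t + m) div (8 * G)"
  have "8 * G * ?M \<le> t + m" by (metis div_mult_self1_is_m div_times_less_eq_dividend mult.commute)
  then have "4 * G * ?M < G * k" using False assms(1) by linarith
  then have "4 * ?M < k" using assms(2) by (metis mult.assoc mult.commute mult_less_cancel1)
  then have "2 * ?M \<le> k div 2" by linarith
  have "k \<le> 2 * (k - k div 2)" by linarith
  then have "k * ?M \<le> 2 * (k - k div 2) * ?M" by (rule mult_right_mono) simp
  also have "\<dots> = (2 * ?M) * (k - k div 2)" by simp
  also have "\<dots> \<le> (k div 2) * (k - k div 2)" using \<open>2 * ?M \<le> k div 2\<close> by (rule mult_right_mono) simp
  finally show ?thesis by linarith
qed

(* One factor per certificate column: n ^ l ^ 4 pays for the choice of T (as n - card T \<le> l ^ 4 * k),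
   (n * (2 * l + 1)) ^ l ^ 2 bounds the choices of the column, and each column carries at least
   n div (8 * l ^ 4) constraints. *)
definition mate_bound :: "real \<Rightarrow> nat \<Rightarrow> nat \<Rightarrow> real" where
  "mate_bound p l n =
     real n ^ l ^ 4 * real (n * (2 * l + 1)) ^ l ^ 2 * max p (1 - p) ^ (n div (8 * l ^ 4))"

lemma certificate_weight_le:
  assumes "0 < n" "0 < l" "0 \<le> r" "r \<le> 1" "T \<subset> {..<n}"
    and z: "z = real n ^ l ^ 4 * real (n * (2 * l + 1)) ^ l ^ 2 * r ^ (n div (8 * l ^ 4))" "z \<le> 1"
  defines "k \<equiv> ceil_div (n - card T) (l ^ 4)"
  shows "real (card (sparse_vectors n l)) ^ k * r ^ card (constraints T k)
    \<le> z * (1 / real n) ^ (n - card T)"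
proof -
  define m where "m = n - card T"
  define M where "M = n div (8 * l ^ 4)"
  define N where "N = real (n * (2 * l + 1)) ^ l ^ 2"
  have "finite T" using assms(5) finite_subset by auto
  have "card T < n" using psubset_card_mono[OF _ assms(5)] by simp
  then have n: "n = card T + m" "0 < m" unfolding m_def by auto
  have m_le: "m \<le> l ^ 4 * k" unfolding m_def k_def using assms(2) by (intro le_mult_ceil_div) simp
  have "0 < k" unfolding k_def m_def[symmetric] using n(2) assms(2) by (intro ceil_div_pos) auto
  have "k * M \<le> card (constraints T k)"
    unfolding card_constraints[OF \<open>finite T\<close>] M_def
    using constraint_count_ge[OF m_le, of "card T"] assms(2) n(1) by simp
  then have "r ^ card (constraints T k) \<le> (r ^ M) ^ k"
    using assms(3,4) by (simp add: power_decreasing mult.commute flip: power_mult)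
  moreover have "real (card (sparse_vectors n l)) ^ k \<le> N ^ k"
  proof (rule power_mono)
    have "real (card (sparse_vectors n l)) \<le> real ((n * (2 * l + 1)) ^ l ^ 2)"
      using card_sparse_vectors_le[OF assms(1)] by (simp only: of_nat_le_iff)
    then show "real (card (sparse_vectors n l)) \<le> N" unfolding N_def by simp
  qed simp
  moreover have "real n ^ m \<le> (real n ^ l ^ 4) ^ k"
    using m_le assms(1) by (simp add: power_increasing flip: power_mult)
  ultimately have "real n ^ m * (real (card (sparse_vectors n l)) ^ k * r ^ card (constraints T k))
      \<le> (real n ^ l ^ 4) ^ k * (N ^ k * (r ^ M) ^ k)"
    using assms(3) by (intro mult_mono) (auto simp: N_def)
  also have "\<dots> = z ^ k" unfolding z(1) N_def M_def by (simp add: power_mult_distrib)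
  also have "\<dots> \<le> z"
    using \<open>0 < k\<close> z assms(3) power_decreasing[of 1 k z] by simp
  finally show ?thesis
    using assms(1) unfolding m_def by (simp add: field_simps power_one_over)
qed

lemma Gnp_prob_mate_dvd_le_sum:
  assumes "0 < p" "p < 1" "0 < l" "0 < n"
  defines "k \<equiv> \<lambda>T. ceil_div (n - card T) (l ^ 4)"
  shows "Gnp_prob n p (\<lambda>E. \<exists>F l'. l' dvd l \<and> cospectral_mate_level n E F l')
    \<le> (\<Sum>T | T \<subset> {..<n}. real (card (sparse_vectors n l)) ^ k T * max p (1 - p) ^ card (constraints T (k T)))"
proof -
  let ?XS = "\<lambda>T. {xs. set xs \<subseteq> sparse_vectors n l \<and> length xs = k T}"
  define C where "C = (SIGMA T:{T. T \<subset> {..<n}}. ?XS T)"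
  have fin_T: "finite {T. T \<subset> {..<n}}" by (rule finite_subset[of _ "Pow {..<n}"]) auto
  have fin_XS: "finite (?XS T)" for T using finite_sparse_vectors[OF assms(4)] by (rule finite_lists_length_eq)
  have "Gnp_prob n p (\<lambda>E. \<exists>F l'. l' dvd l \<and> cospectral_mate_level n E F l')
      \<le> subset_prob p (all_edges n) (\<lambda>E. \<exists>c\<in>C. certified n (fst c) (snd c) E)"
    unfolding Gnp_prob_eq_subset_prob
  proof (rule subset_prob_mono)
    fix E assume "E \<subseteq> all_edges n" "\<exists>F l'. l' dvd l \<and> cospectral_mate_level n E F l'"
    then obtain F l' where mate: "cospectral_mate_level n E F l'" "l' dvd l" "E \<in> graphs n"
      unfolding graphs_def by blast
    from certificate_of_mate[OF mate(1,2) assms(3) mate(3)] obtain T xs where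
      "T \<subset> {..<n}" "length xs = ceil_div (n - card T) (l ^ 4)" "set xs \<subseteq> sparse_vectors n l"
      "certified n T xs E" .
    then have "(T, xs) \<in> C" "certified n (fst (T, xs)) (snd (T, xs)) E"
      unfolding C_def k_def by simp_all
    then show "\<exists>c\<in>C. certified n (fst c) (snd c) E" by blast
  qed (use assms(1,2) in auto)
  also have "\<dots> \<le> (\<Sum>c\<in>C. subset_prob p (all_edges n) (certified n (fst c) (snd c)))"
    using assms(1,2) fin_T fin_XS unfolding C_def by (intro subset_prob_Bex_le finite_SigmaI) auto
  also have "\<dots> \<le> (\<Sum>c\<in>C. max p (1 - p) ^ card (constraints (fst c) (length (snd c))))"
    using assms(1,2) by (intro sum_mono subset_prob_certified_le) auto
  also have "\<dots> = (\<Sum>T | T \<subset> {..<n}. \<Sum>xs\<in>?XS T. max p (1 - p) ^ card (constraints T (k T)))"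
    unfolding C_def using fin_T fin_XS by (subst sum.Sigma) (auto intro!: sum.cong)
  also have "\<dots> = (\<Sum>T | T \<subset> {..<n}. real (card (sparse_vectors n l)) ^ k T * max p (1 - p) ^ card (constraints T (k T)))"
    by (simp add: card_lists_length_eq[OF finite_sparse_vectors[OF assms(4)]])
  finally show ?thesis .
qed

lemma Gnp_prob_mate_dvd_le:
  assumes "0 < p" "p < 1" "0 < l" "0 < n" "mate_bound p l n \<le> 1"
  shows "Gnp_prob n p (\<lambda>E. \<exists>F l'. l' dvd l \<and> cospectral_mate_level n E F l') \<le> mate_bound p l n * exp 1"
proof -
  let ?z = "mate_bound p l n"
  have z: "0 \<le> ?z" unfolding mate_bound_def by simp
  have "Gnp_prob n p (\<lambda>E. \<exists>F l'. l' dvd l \<and> cospectral_mate_level n E F l')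
      \<le> (\<Sum>T | T \<subset> {..<n}. real (card (sparse_vectors n l)) ^ ceil_div (n - card T) (l ^ 4)
          * max p (1 - p) ^ card (constraints T (ceil_div (n - card T) (l ^ 4))))"
    by (rule Gnp_prob_mate_dvd_le_sum[OF assms(1-4)])
  also have "\<dots> \<le> (\<Sum>T | T \<subset> {..<n}. ?z * (1 / real n) ^ (n - card T))"
    using assms by (intro sum_mono certificate_weight_le) (auto simp: mate_bound_def)
  also have "\<dots> = (\<Sum>T | T \<subset> {..<n}. ?z * (1 / real n) ^ card ({..<n} - T))"
    by (intro sum.cong refl) (auto simp: card_Diff_subset finite_subset)
  also have "\<dots> \<le> (\<Sum>T\<in>Pow {..<n}. ?z * (1 / real n) ^ card ({..<n} - T))"
    using z by (intro sum_mono2) auto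
  also have "\<dots> = ?z * (1 + 1 / real n) ^ n"
    using prod_add[of "{..<n}" "\<lambda>_. 1" "\<lambda>_. 1 / real n"] by (simp add: sum_distrib_left)
  also have "\<dots> \<le> ?z * exp 1"
  proof (rule mult_left_mono[OF _ z])
    show "(1 + 1 / real n) ^ n \<le> exp 1"
      by (rule exp_ge_one_plus_x_over_n_power_n) (use assms(4) in auto)
  qed
  finally show ?thesis .
qed

section \<open>Asymptotics\<close>

lemma tendsto_poly_times_geometric:
  fixes \<rho> :: real
  assumes "0 < \<rho>" "\<rho> < 1"
  shows "(\<lambda>n. real n ^ K * \<rho> ^ n) \<longlonglongrightarrow> 0"
proof -
  define a where "a = - ln \<rho>"
  have a: "0 < a" unfolding a_def using assms by simp
  have eq: "real n ^ K * \<rho> ^ n = (1 / a ^ K) * ((a * real n) ^ K / exp (a * real n))" for n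
  proof -
    have "\<rho> ^ n = 1 / exp (a * real n)"
      using assms unfolding a_def by (simp add: exp_minus exp_of_nat_mult field_simps)
    then show ?thesis using a by (simp add: power_mult_distrib field_simps)
  qed
  have "(\<lambda>n. (a * real n) ^ K / exp (a * real n)) \<longlonglongrightarrow> 0"
    using filterlim_tendsto_pos_mult_at_top[OF tendsto_const a filterlim_real_sequentially]
    by (rule filterlim_compose[OF tendsto_power_div_exp_0])
  then show ?thesis unfolding eq by (rule tendsto_mult_right_zero)
qed

lemma mate_bound_tendsto_0:
  assumes "0 < p" "p < 1" "0 < l"
  shows "mate_bound p l \<longlonglongrightarrow> 0"
proof -
  define r where "r = max p (1 - p)"
  define c where "c = 8 * l ^ 4"
  define \<rho> where "\<rho> = root c r"
  have r: "0 < r" "r < 1" unfolding r_def using assms by auto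
  have c: "0 < c" unfolding c_def using assms(3) by simp
  have \<rho>: "0 < \<rho>" "\<rho> < 1" "\<rho> ^ c = r"
    unfolding \<rho>_def using r c by (simp_all add: real_root_lt_1_iff real_root_pow_pos)
  have r_pow: "r ^ (n div c) \<le> \<rho> ^ n / r" for n
  proof -
    have "n mod c < c" using c by simp
    then have "n \<le> c * (n div c) + c" using mult_div_mod_eq[of c n] by linarith
    then have "\<rho> ^ (c * (n div c) + c) \<le> \<rho> ^ n" using \<rho> by (intro power_decreasing) auto
    also have "\<rho> ^ (c * (n div c) + c) = r ^ (n div c) * r"
      using \<rho>(3) by (simp add: power_add power_mult)
    finally show ?thesis using r by (simp add: field_simps)
  qed
  define g where "g = (\<lambda>n. (real (2 * l + 1) ^ l ^ 2 / r) * (real n ^ (l ^ 4 + l ^ 2) * \<rho> ^ n))"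
  have le: "mate_bound p l n \<le> g n" for n
  proof -
    have "mate_bound p l n \<le> real n ^ l ^ 4 * real (n * (2 * l + 1)) ^ l ^ 2 * (\<rho> ^ n / r)"
      unfolding mate_bound_def r_def[symmetric] c_def[symmetric] by (intro mult_left_mono r_pow) simp
    also have "\<dots> = g n"
      unfolding g_def
      by (simp only: of_nat_mult power_mult_distrib power_add) (use r in \<open>simp add: field_simps\<close>)
    finally show ?thesis .
  qed
  show ?thesis
  proof (rule tendsto_sandwich[of "\<lambda>_. 0" _ _ g])
    show "eventually (\<lambda>n. 0 \<le> mate_bound p l n) sequentially"
      unfolding mate_bound_def by simp
    show "eventually (\<lambda>n. mate_bound p l n \<le> g n) sequentially"
      using le by simp
    show "g \<longlonglongrightarrow> 0"
      unfolding g_def by (intro tendsto_mult_right_zero tendsto_poly_times_geometric \<rho>(1,2))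
  qed simp
qed

lemma cospectral_mate_level_if_gen: "gen_cospectral_mate_level n E F l \<Longrightarrow> cospectral_mate_level n E F l"
  unfolding gen_cospectral_mate_level_def cospectral_mate_level_def by blast

lemma Gnp_prob_mate_dvd_tendsto_0:
  assumes "0 < p" "p < 1" "0 < l"
  shows "(\<lambda>n. Gnp_prob n p (\<lambda>E. \<exists>F l'. l' dvd l \<and> cospectral_mate_level n E F l')) \<longlonglongrightarrow> 0"
proof (rule tendsto_sandwich[of "\<lambda>_. 0" _ _ "\<lambda>n. mate_bound p l n * exp 1"])
  have lim: "mate_bound p l \<longlonglongrightarrow> 0" by (rule mate_bound_tendsto_0[OF assms])
  have "eventually (\<lambda>n. mate_bound p l n < 1) sequentially"
    using lim by (rule order_tendstoD) simp
  then have "eventually (\<lambda>n. mate_bound p l n \<le> 1 \<and> 0 < n) sequentially"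
    using eventually_gt_at_top[of 0] by eventually_elim auto
  then show "eventually (\<lambda>n. Gnp_prob n p (\<lambda>E. \<exists>F l'. l' dvd l \<and> cospectral_mate_level n E F l')
      \<le> mate_bound p l n * exp 1) sequentially"
    by eventually_elim (auto intro: Gnp_prob_mate_dvd_le[OF assms])
  show "(\<lambda>n. mate_bound p l n * exp 1) \<longlonglongrightarrow> 0" using tendsto_mult_left_zero[OF lim] .
  show "eventually (\<lambda>n. 0 \<le> Gnp_prob n p (\<lambda>E. \<exists>F l'. l' dvd l \<and> cospectral_mate_level n E F l'))
      sequentially"
    using assms(1,2) by (simp add: Gnp_prob_nonneg)
qed simp

lemma Gnp_prob_tendsto_0_mono:
  assumes "0 \<le> p" "p \<le> 1" "(\<lambda>n. Gnp_prob n p (R n)) \<longlonglongrightarrow> 0" "\<And>n E. P n E \<Longrightarrow> R n E"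
  shows "(\<lambda>n. Gnp_prob n p (P n)) \<longlonglongrightarrow> 0"
proof (rule tendsto_sandwich[of "\<lambda>_. 0" _ _ "\<lambda>n. Gnp_prob n p (R n)"])
  show "eventually (\<lambda>n. 0 \<le> Gnp_prob n p (P n)) sequentially"
    using assms(1,2) by (simp add: Gnp_prob_nonneg)
  show "eventually (\<lambda>n. Gnp_prob n p (P n) \<le> Gnp_prob n p (R n)) sequentially"
    using assms(1,2,4) by (simp add: Gnp_prob_mono)
qed (simp_all add: assms(3))

theorem mainTheorem1:
  fixes p :: real and l :: nat
  assumes "0 < p" "p < 1" "l \<ge> 2"
  shows "((\<lambda>n. Gnp_prob n p (\<lambda>E. \<exists>F l'. l' dvd l \<and> cospectral_mate_level n E F l'))
            \<longlonglongrightarrow> 0) \<and>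
         ((\<lambda>n. Gnp_prob n p (\<lambda>E. \<exists>F. cospectral_mate_level n E F l)) \<longlonglongrightarrow> 0) \<and>
         ((\<lambda>n. Gnp_prob n p (\<lambda>E. \<exists>F l'. l' dvd l \<and> gen_cospectral_mate_level n E F l'))
            \<longlonglongrightarrow> 0) \<and>
         ((\<lambda>n. Gnp_prob n p (\<lambda>E. \<exists>F. gen_cospectral_mate_level n E F l)) \<longlonglongrightarrow> 0)"
proof -
  have lim: "(\<lambda>n. Gnp_prob n p (\<lambda>E. \<exists>F l'. l' dvd l \<and> cospectral_mate_level n E F l')) \<longlonglongrightarrow> 0"
    using assms by (intro Gnp_prob_mate_dvd_tendsto_0) auto
  have p: "0 \<le> p" "p \<le> 1" using assms(1,2) by simp_all
  show ?thesis
    by (intro conjI lim Gnp_prob_tendsto_0_mono[OF p lim])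
      (use dvd_refl cospectral_mate_level_if_gen in blast)+
qed

end
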